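(* Let $f(x)\in\mathbb{Q}(x)$ be a non-constant rational function. Then: (a) If $f$ satisfies WP, then $f$ has at least two distinct poles in $\mathbb{P}^1(\mathbb{R})$, or has at least one pole of odd order in $\mathbb{P}^1(\mathbb{R})$. (b) If $f(\mathbb{Q})$ is an open base and $f$ has at least one pole of odd order in $\mathbb{P}^1(\mathbb{R})$, then $f$ satisfies WP. (c) If $f$ satisfies the EWP, then $f$ has a pole in $\mathbb{P}^1(\mathbb{R})$. (d) If $f$ satisfies the EWP, then for every prime $p$, $f$ has a pole in $\mathbb{P}^1(\mathbb{Q}_p)$.
   Context: For $X\subseteq\mathbb{Q}$ and a positive integer $N$, write $X_N:=\{x_1+\cdots+x_N : x_1,\dots,x_N\in X\}$. $X$ is called a base if $X_N=\mathbb{Q}$ for some $N\ge 1$; an open base if for some $N\ge1$ and some rationals $a<b$, $X_N\supseteq (a,b)\cap\mathbb{Q}$; a virtual base if for some $N\ge 1$ every rational number can be written as $\epsilon_1x_1+\cdots+\epsilon_Nx_N$ with $x_i\in X$ and $\epsilon_i\in\{1,-1\}$. For a rational function $f\in\mathbb{Q}(x)$ and a field $F\supseteq \mathbb{Q}$, $f(F)$ denotes the set of values $f(a)$ for $a\in F$ not a pole of $f$. $f$ satisfies WP if $f(\mathbb{Q})$ is a base, and satisfies the EWP if $f(\mathbb{Q})$ is a virtual base. Poles are considered on the projective line, including the point $\infty$ (with its order as a pole of $f$). *)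

theory Defs
  imports Complex_Main "HOL-Computational_Algebra.Computational_Algebra"
begin

text \<open>A rational function f in Q(x) is represented in reduced form f = P/Q with
  P, Q :: rat poly, Q nonzero and P, Q coprime (every f has such a representation).
  All notions below take the pair (P, Q).\<close>

definition nonconstant :: "rat poly \<Rightarrow> rat poly \<Rightarrow> bool" where
  "nonconstant P Q \<longleftrightarrow> \<not> (\<exists>c::rat. P = smult c Q)"

definition ratfun_values :: "rat poly \<Rightarrow> rat poly \<Rightarrow> rat set" where
  "ratfun_values P Q = {poly P a / poly Q a | a. poly Q a \<noteq> 0}"

definition sumset :: "rat set \<Rightarrow> nat \<Rightarrow> rat set" where
  "sumset X N = {(\<Sum>i<N. x i) | x::nat \<Rightarrow> rat. \<forall>i<N. x i \<in> X}"

definition is_base :: "rat set \<Rightarrow> bool" where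
  "is_base X \<longleftrightarrow> (\<exists>N\<ge>1. sumset X N = UNIV)"

definition is_open_base :: "rat set \<Rightarrow> bool" where
  "is_open_base X \<longleftrightarrow> (\<exists>N\<ge>1. \<exists>a b::rat. a < b \<and> {q. a < q \<and> q < b} \<subseteq> sumset X N)"

definition is_virtual_base :: "rat set \<Rightarrow> bool" where
  "is_virtual_base X \<longleftrightarrow> (\<exists>N\<ge>1. \<forall>r::rat. \<exists>(x::nat \<Rightarrow> rat) (e::nat \<Rightarrow> rat).
      (\<forall>i<N. x i \<in> X \<and> (e i = 1 \<or> e i = -1)) \<and> r = (\<Sum>i<N. e i * x i))"

definition WP :: "rat poly \<Rightarrow> rat poly \<Rightarrow> bool" where "WP P Q \<longleftrightarrow> is_base (ratfun_values P Q)"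
definition EWP :: "rat poly \<Rightarrow> rat poly \<Rightarrow> bool" where "EWP P Q \<longleftrightarrow> is_virtual_base (ratfun_values P Q)"

text \<open>Poles in P^1(R): Some a for a finite real pole a (real root of the reduced
  denominator), None for the point at infinity (pole iff deg P > deg Q).\<close>
definition real_poles :: "rat poly \<Rightarrow> rat poly \<Rightarrow> real option set" where
  "real_poles P Q = Some ` {a. poly (map_poly of_rat Q) a = 0}
     \<union> (if degree Q < degree P then {None} else {})"

definition pole_order :: "rat poly \<Rightarrow> rat poly \<Rightarrow> real option \<Rightarrow> nat" where
  "pole_order P Q z = (case z of
      Some a \<Rightarrow> order a (map_poly of_rat Q)
    | None \<Rightarrow> degree P - degree Q)"

text \<open>p-adic integers as compatible sequences (inverse limit of Z/p^k Z):
  u represents an element of Z_p iff u (k+1) = u k mod p^k for all k.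
  An integer polynomial h vanishes at it iff h(u k) = 0 mod p^k for all k.
  Every element of Q_p is xi / p^m with xi in Z_p, and g(xi/p^m) = 0 iff
  sum_i g_i xi^i p^(m (deg g - i)) = 0.  A rational polynomial q has a root in Q_p
  iff some integer multiple g of it does.\<close>
definition padic_int_seq :: "nat \<Rightarrow> (nat \<Rightarrow> int) \<Rightarrow> bool" where
  "padic_int_seq p u \<longleftrightarrow> (\<forall>k. (int p ^ k) dvd (u (Suc k) - u k))"

definition has_Qp_root :: "nat \<Rightarrow> rat poly \<Rightarrow> bool" where
  "has_Qp_root p q \<longleftrightarrow> (\<exists>(g::int poly) (c::rat) (m::nat) u.
      c \<noteq> 0 \<and> q = smult c (map_poly of_int g) \<and> padic_int_seq p u \<and>
      (\<forall>k. (int p ^ k) dvd (\<Sum>i\<le>degree g. coeff g i * u k ^ i * int p ^ (m * (degree g - i)))))"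

definition has_Qp_pole :: "nat \<Rightarrow> rat poly \<Rightarrow> rat poly \<Rightarrow> bool" where
  "has_Qp_pole p P Q \<longleftrightarrow> degree Q < degree P \<or> has_Qp_root p Q"

end

theory Submission
  imports Defs "HOL-Analysis.Analysis" "HOL-Computational_Algebra.Field_as_Ring" "HOL-Number_Theory.Cong"
begin

text \<open>
  Near a real pole of order k the function behaves like L/t^k for a local parameter t
  and some L \<noteq> 0.  A pole of odd order therefore makes f tend to +\<infinity> on one side and to -\<infinity>
  on the other; by continuity and density of \<rat> the values f(\<rat>) then meet every interval far
  enough out in both directions, so two large summands can shift any rational into the interval
  covered by an open base.  If instead all real poles have even order and there is at most one
  of them, f keeps a constant sign near that pole and is bounded elsewhere by compactness, so
  f(\<rat>) is bounded on one side and so are all its sumsets; with no real pole at all f(\<rat>) is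
  bounded and cannot be a virtual base.

  Clear denominators, write f = h/g with integer polynomials and evaluate at
  a = s/t as a quotient of homogenised values H(s,t)/G(s,t).  If Q has no root in Q_p and
  f has no pole at \<infinity>, the p-adic valuation of G(s,t) is bounded: for highly divisible t it is
  controlled by the leading coefficient of g, and otherwise unboundedly good approximate roots would
  converge, by compactness of Z_p, to a root.  Hence p^K f(\<rat>) consists of p-integral
  rationals, and so do all signed sums, which misses 1/p.
\<close>

section \<open>Eventual bounds and divergence along filters\<close>

lemma tendsto_imp_eventually_bdd_below:
  fixes g :: "'a \<Rightarrow> real"
  assumes "(g \<longlongrightarrow> l) F"
  shows "\<exists>B. eventually (\<lambda>x. B \<le> g x) F"
proof
  have "eventually (\<lambda>x. l - 1 < g x) F" using assms by (rule order_tendstoD) simp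
  thus "eventually (\<lambda>x. l - 1 \<le> g x) F" by (rule eventually_mono) simp
qed

lemma eventually_sgn_mult_nonneg:
  fixes u w :: "'a \<Rightarrow> real"
  assumes "(u \<longlongrightarrow> L) F" "eventually (\<lambda>x. 0 \<le> w x) F"
  shows "eventually (\<lambda>x. 0 \<le> sgn L * (u x * w x)) F"
proof (cases "L = 0")
  case False
  have "((\<lambda>x. sgn L * u x) \<longlongrightarrow> sgn L * L) F" by (intro tendsto_mult tendsto_const assms(1))
  moreover have "0 < sgn L * L" using False by (cases "L > 0") auto
  ultimately have "eventually (\<lambda>x. 0 < sgn L * u x) F" by (rule order_tendstoD(1))
  with assms(2) show ?thesis
    by eventually_elim (metis mult.assoc less_le mult_nonneg_nonneg)
qed simp

lemma filterlim_mult_at_top_at_bot: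
  fixes u w :: "'a \<Rightarrow> real"
  assumes "(u \<longlongrightarrow> L) F1" "(u \<longlongrightarrow> L) F2" "L \<noteq> 0" "filterlim w at_top F1" "filterlim w at_bot F2"
  shows "\<exists>G1 G2. {G1, G2} = {F1, F2} \<and>
    filterlim (\<lambda>x. u x * w x) at_top G1 \<and> filterlim (\<lambda>x. u x * w x) at_bot G2"
proof (cases "L > 0")
  case True
  have "filterlim (\<lambda>x. u x * w x) at_top F1"
    using assms(1) True assms(4) by (rule filterlim_tendsto_pos_mult_at_top)
  moreover have "filterlim (\<lambda>x. u x * - w x) at_top F2"
    using assms(2) True assms(5) by (intro filterlim_tendsto_pos_mult_at_top) (simp_all add: filterlim_uminus_at_bot)
  ultimately show ?thesis by (intro exI[of _ F1] exI[of _ F2]) (simp add: filterlim_uminus_at_bot)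
next
  case False
  hence L: "0 < - L" using assms(3) by simp
  have "filterlim (\<lambda>x. - u x * - w x) at_top F2"
    using tendsto_minus[OF assms(2)] L assms(5)
    by (intro filterlim_tendsto_pos_mult_at_top) (auto simp: filterlim_uminus_at_bot)
  moreover have "filterlim (\<lambda>x. - u x * w x) at_top F1"
    using tendsto_minus[OF assms(1)] L assms(4) by (rule filterlim_tendsto_pos_mult_at_top)
  ultimately show ?thesis by (intro exI[of _ F2] exI[of _ F1]) (auto simp: filterlim_uminus_at_bot)
qed

lemma filterlim_at_top_at_bot_factor:
  fixes f u w :: "'a \<Rightarrow> real"
  assumes "(u \<longlongrightarrow> L) F1" "(u \<longlongrightarrow> L) F2" "L \<noteq> 0" "filterlim w at_top F1" "filterlim w at_bot F2"
    and "eventually (\<lambda>x. u x * w x = f x) F1" "eventually (\<lambda>x. u x * w x = f x) F2"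
  shows "\<exists>G1 G2. {G1, G2} = {F1, F2} \<and> filterlim f at_top G1 \<and> filterlim f at_bot G2"
proof -
  obtain G1 G2 where G: "{G1, G2} = {F1, F2}"
    "filterlim (\<lambda>x. u x * w x) at_top G1" "filterlim (\<lambda>x. u x * w x) at_bot G2"
    using filterlim_mult_at_top_at_bot[OF assms(1-5)] by blast
  have "eventually (\<lambda>x. u x * w x = f x) G" if "G \<in> {F1, F2}" for G
    using that assms(6,7) by blast
  hence "eventually (\<lambda>x. u x * w x = f x) G1" "eventually (\<lambda>x. u x * w x = f x) G2"
    using G(1) by (metis insertI1 insert_commute)+
  thus ?thesis using G filterlim_cong[OF refl refl] by metis
qed

lemma bdd_below_range_if_locally_bdd_below:
  fixes g :: "real \<Rightarrow> real"
  assumes local: "\<And>a. \<exists>B. eventually (\<lambda>x. B \<le> g x) (at a)"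
    and infinity: "\<exists>B. eventually (\<lambda>x. B \<le> g x) at_infinity"
  shows "bdd_below (range g)"
proof -
  obtain B0 R where R: "\<And>x. R \<le> norm x \<Longrightarrow> B0 \<le> g x"
    using infinity unfolding eventually_at_infinity by blast
  have "\<forall>a. \<exists>B d. 0 < d \<and> (\<forall>x. x \<noteq> a \<and> dist x a < d \<longrightarrow> B \<le> g x)"
    using local unfolding eventually_at by fastforce
  then obtain B d where "\<forall>a. 0 < d a \<and> (\<forall>x. x \<noteq> a \<and> dist x a < d a \<longrightarrow> B a \<le> g x)"
    unfolding choice_iff by blast
  hence d: "\<And>a. 0 < d a" and B: "\<And>a x. x \<noteq> a \<Longrightarrow> dist x a < d a \<Longrightarrow> B a \<le> g x"
    by auto
  obtain T where T: "T \<subseteq> cball 0 R" "finite T" "cball 0 R \<subseteq> (\<Union>a\<in>T. ball a (d a))"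
    using compactE_image[OF compact_cball, of "cball 0 R" "\<lambda>a. ball a (d a)"] d by force
  define m where "m = Min (insert B0 ((\<lambda>a. min (B a) (g a)) ` T))"
  have "m \<le> g x" for x
  proof (cases "R \<le> norm x")
    case True
    thus ?thesis using R[OF True] T(2) unfolding m_def by (meson Min_le finite_imageI finite_insert insertI1 order_trans)
  next
    case False
    then obtain a where a: "a \<in> T" "dist a x < d a" using T(3) by (force simp: dist_norm)
    have "min (B a) (g a) \<le> g x" using B[of x a] a(2) by (cases "x = a") (auto simp: dist_commute)
    moreover have "m \<le> min (B a) (g a)" using a(1) T(2) unfolding m_def by (intro Min_le) auto
    ultimately show ?thesis by linarith
  qed
  thus ?thesis by (intro bdd_belowI2)
qed

lemma bdd_below_range_uminus: "bdd_below (range (\<lambda>x. - f x :: real)) \<longleftrightarrow> bdd_above (range f)"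
  by (metis bdd_below_uminus image_image)

definition dense_at_top :: "'a::linorder set \<Rightarrow> bool" where
  "dense_at_top V \<longleftrightarrow> (\<exists>M. \<forall>c d. M \<le> c \<longrightarrow> c < d \<longrightarrow> (\<exists>v\<in>V. c < v \<and> v < d))"

lemma dense_at_top_rat_image:
  fixes g :: "real \<Rightarrow> real"
  assumes S: "open S" "connected S" and g: "continuous_on S g"
    and lim: "filterlim g at_top F" and F: "F \<noteq> bot" "eventually (\<lambda>x. x \<in> S) F"
  shows "dense_at_top (g ` (S \<inter> \<rat>))"
proof -
  obtain x0 where x0: "x0 \<in> S" using eventually_happens'[OF F] by blast
  have "\<exists>v\<in>g ` (S \<inter> \<rat>). c < v \<and> v < d" if cd: "g x0 \<le> c" "c < d" for c d
  proof -
    have "eventually (\<lambda>x. d < g x) F" using lim unfolding filterlim_at_top_dense by blast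
    with F(2) have "eventually (\<lambda>x. x \<in> S \<and> d < g x) F" by (rule eventually_conj)
    then obtain x1 where x1: "x1 \<in> S" "d < g x1" using eventually_happens'[OF F(1)] by blast
    have "{g x0..g x1} \<subseteq> g ` S"
      by (rule connected_contains_Icc[OF connected_continuous_image[OF g S(2)]]) (use x0 x1 in auto)
    moreover have "(c + d) / 2 \<in> {g x0..g x1}" using cd x1(2) by auto
    ultimately have "(c + d) / 2 \<in> g ` S" by blast
    then obtain z where "z \<in> S" "g z = (c + d) / 2" by (metis imageE)
    hence "z \<in> g -` {c<..<d} \<inter> S" using cd(2) by auto
    moreover have "open (g -` {c<..<d} \<inter> S)"
      using continuous_on_open_vimage[OF S(1)] g open_greaterThanLessThan by blast
    ultimately have "g -` {c<..<d} \<inter> S \<inter> \<rat> \<noteq> {}"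
      using open_Int_closure_eq_empty[of "g -` {c<..<d} \<inter> S" \<rat>] by (auto simp: Rats_closure_real)
    thus ?thesis by auto
  qed
  thus ?thesis unfolding dense_at_top_def by blast
qed

lemma eventually_in_open_interval:
  fixes F :: "real filter"
  assumes "F \<in> {at_right a, at_left a, at_top, at_bot}" "eventually P F"
  shows "\<exists>S. open S \<and> connected S \<and> (\<forall>x\<in>S. P x) \<and> eventually (\<lambda>x. x \<in> S) F"
  using assms
proof (elim insertE emptyE)
  assume F: "F = at_right a"
  then obtain b where "b > a" "\<forall>x\<in>{a<..<b}. P x" using assms(2) by (auto simp: eventually_at_right_field)
  thus ?thesis unfolding F using eventually_at_right_field by (intro exI[of _ "{a<..<b}"]) auto
next
  assume F: "F = at_left a"
  then obtain b where "b < a" "\<forall>x\<in>{b<..<a}. P x" using assms(2) by (auto simp: eventually_at_left_field)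
  thus ?thesis unfolding F using eventually_at_left_field by (intro exI[of _ "{b<..<a}"]) auto
next
  assume F: "F = at_top"
  then obtain b where "\<forall>x\<in>{b<..}. P x" using assms(2) by (auto simp: eventually_at_top_dense)
  thus ?thesis unfolding F using eventually_at_top_dense by (intro exI[of _ "{b<..}"]) auto
next
  assume F: "F = at_bot"
  then obtain b where "\<forall>x\<in>{..<b}. P x" using assms(2) by (auto simp: eventually_at_bot_dense)
  thus ?thesis unfolding F using eventually_at_bot_dense by (intro exI[of _ "{..<b}"]) auto
qed

section \<open>Real rational functions near their poles\<close>

lemma tendsto_ratfun_at_infinity:
  fixes p q :: "real poly"
  assumes "q \<noteq> 0"
  shows "((\<lambda>x. poly p x / poly q x * x ^ degree q / x ^ degree p) \<longlongrightarrow> lead_coeff p / lead_coeff q) at_infinity"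
proof -
  have "((\<lambda>x. (poly p x / x ^ degree p) / (poly q x / x ^ degree q)) \<longlongrightarrow> lead_coeff p / lead_coeff q) at_infinity"
    using assms by (intro tendsto_divide poly_divide_tendsto_aux) auto
  moreover have "eventually (\<lambda>x. (poly p x / x ^ degree p) / (poly q x / x ^ degree q)
      = poly p x / poly q x * x ^ degree q / x ^ degree p) at_infinity"
    using eventually_not_equal_at_infinity[of 0] by eventually_elim (simp add: field_simps)
  ultimately show ?thesis by (rule Lim_transform_eventually)
qed

lemma tendsto_ratfun_at_infinity_degree_le:
  fixes p q :: "real poly"
  assumes "q \<noteq> 0" "degree p \<le> degree q"
  shows "\<exists>l. ((\<lambda>x. poly p x / poly q x) \<longlongrightarrow> l) at_infinity"
proof
  define k where "k = degree q - degree p"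
  have "((\<lambda>x. poly p x / poly q x * x ^ degree q / x ^ degree p * inverse x ^ k)
      \<longlongrightarrow> lead_coeff p / lead_coeff q * 0 ^ k) at_infinity"
    by (intro tendsto_mult tendsto_power tendsto_inverse_0 tendsto_ratfun_at_infinity assms(1))
  moreover have "eventually (\<lambda>x. poly p x / poly q x * x ^ degree q / x ^ degree p * inverse x ^ k
      = poly p x / poly q x) at_infinity"
    using eventually_not_equal_at_infinity[of 0]
  proof eventually_elim
    case (elim x)
    have "x ^ degree q / x ^ degree p * inverse x ^ k = 1"
      using elim assms(2) by (simp add: k_def power_diff power_inverse)
    thus ?case using elim by (simp add: mult.assoc)
  qed
  ultimately show "((\<lambda>x. poly p x / poly q x) \<longlongrightarrow> lead_coeff p / lead_coeff q * 0 ^ k) at_infinity"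
    by (rule Lim_transform_eventually)
qed

lemma tendsto_ratfun_over_power_at_infinity:
  fixes p q :: "real poly"
  assumes "q \<noteq> 0" "degree q < degree p"
  shows "\<exists>L. L \<noteq> 0 \<and> ((\<lambda>x. poly p x / poly q x / x ^ (degree p - degree q)) \<longlongrightarrow> L) at_infinity"
proof (intro exI conjI)
  have "eventually (\<lambda>x. poly p x / poly q x * x ^ degree q / x ^ degree p
      = poly p x / poly q x / x ^ (degree p - degree q)) at_infinity"
    using eventually_not_equal_at_infinity[of 0] by eventually_elim (use assms(2) in \<open>simp add: power_diff\<close>)
  with tendsto_ratfun_at_infinity[OF assms(1)]
  show "((\<lambda>x. poly p x / poly q x / x ^ (degree p - degree q)) \<longlongrightarrow> lead_coeff p / lead_coeff q) at_infinity"
    by (rule Lim_transform_eventually)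
  show "lead_coeff p / lead_coeff q \<noteq> 0" using assms by auto
qed

lemma tendsto_ratfun_times_power_at_root:
  fixes p q :: "real poly"
  assumes "q \<noteq> 0" "poly p a \<noteq> 0"
  shows "\<exists>L. L \<noteq> 0 \<and> ((\<lambda>x. poly p x / poly q x * (x - a) ^ order a q) \<longlongrightarrow> L) (at a)"
proof -
  obtain r where r: "q = [:- a, 1:] ^ order a q * r" "\<not> [:- a, 1:] dvd r"
    using order_decomp[OF assms(1)] by blast
  have ra: "poly r a \<noteq> 0" using r(2) by (simp add: poly_eq_0_iff_dvd)
  have q: "poly q x = (x - a) ^ order a q * poly r x" for x
    by (subst r(1)) (simp add: poly_power)
  have "((\<lambda>x. poly p x / poly r x) \<longlongrightarrow> poly p a / poly r a) (at a)"
    using ra by (intro tendsto_divide tendsto_poly tendsto_ident_at)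
  moreover have "eventually (\<lambda>x. poly p x / poly r x = poly p x / poly q x * (x - a) ^ order a q) (at a)"
    unfolding eventually_at_filter q by (intro always_eventually) simp
  ultimately have "((\<lambda>x. poly p x / poly q x * (x - a) ^ order a q) \<longlongrightarrow> poly p a / poly r a) (at a)"
    by (rule Lim_transform_eventually)
  moreover have "poly p a / poly r a \<noteq> 0" using assms(2) ra by simp
  ultimately show ?thesis by blast
qed

lemma ratfun_eventually_bdd_below_at_nonroot:
  fixes p q :: "real poly"
  assumes "poly q a \<noteq> 0"
  shows "\<exists>B. eventually (\<lambda>x. B \<le> c * (poly p x / poly q x)) (at a)"
proof (rule tendsto_imp_eventually_bdd_below)
  show "((\<lambda>x. c * (poly p x / poly q x)) \<longlongrightarrow> c * (poly p a / poly q a)) (at a)"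
    using assms by (intro tendsto_intros) auto
qed

lemma ratfun_eventually_bdd_below_at_infinity:
  fixes p q :: "real poly"
  assumes "q \<noteq> 0" "degree p \<le> degree q"
  shows "\<exists>B. eventually (\<lambda>x. B \<le> c * (poly p x / poly q x)) at_infinity"
proof -
  obtain l where "((\<lambda>x. poly p x / poly q x) \<longlongrightarrow> l) at_infinity"
    using tendsto_ratfun_at_infinity_degree_le[OF assms] by blast
  thus ?thesis by (rule tendsto_imp_eventually_bdd_below[OF tendsto_mult_left])
qed

lemma ratfun_bdd_below:
  fixes p q :: "real poly"
  assumes "\<And>a. poly q a = 0 \<Longrightarrow> \<exists>B. eventually (\<lambda>x. B \<le> c * (poly p x / poly q x)) (at a)"
    and "\<exists>B. eventually (\<lambda>x. B \<le> c * (poly p x / poly q x)) at_infinity"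
  shows "bdd_below (range (\<lambda>x. c * (poly p x / poly q x)))"
  using assms ratfun_eventually_bdd_below_at_nonroot by (intro bdd_below_range_if_locally_bdd_below) blast+

lemma ratfun_even_pole_at_infinity:
  fixes p q :: "real poly"
  assumes "q \<noteq> 0" "degree q < degree p" "even (degree p - degree q)"
  shows "\<exists>L. L \<noteq> 0 \<and> eventually (\<lambda>x. 0 \<le> sgn L * (poly p x / poly q x)) at_infinity"
proof -
  define k where "k = degree p - degree q"
  obtain L where L: "L \<noteq> 0" "((\<lambda>x. poly p x / poly q x / x ^ k) \<longlongrightarrow> L) at_infinity"
    using tendsto_ratfun_over_power_at_infinity[OF assms(1,2)] unfolding k_def by blast
  have "eventually (\<lambda>x. 0 \<le> sgn L * (poly p x / poly q x / x ^ k * x ^ k)) at_infinity"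
    using L(2) by (rule eventually_sgn_mult_nonneg)
      (use assms(3) in \<open>simp add: k_def zero_le_even_power\<close>)
  with eventually_not_equal_at_infinity[of 0]
  have "eventually (\<lambda>x. 0 \<le> sgn L * (poly p x / poly q x)) at_infinity"
    by eventually_elim simp
  thus ?thesis using L(1) by blast
qed

lemma ratfun_even_pole:
  fixes p q :: "real poly"
  assumes "q \<noteq> 0" "poly p a \<noteq> 0" "even (order a q)"
  shows "\<exists>L. L \<noteq> 0 \<and> eventually (\<lambda>x. 0 \<le> sgn L * (poly p x / poly q x)) (at a)"
proof -
  define k where "k = order a q"
  obtain L where L: "L \<noteq> 0" "((\<lambda>x. poly p x / poly q x * (x - a) ^ k) \<longlongrightarrow> L) (at a)"
    using tendsto_ratfun_times_power_at_root[OF assms(1,2)] unfolding k_def by blast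
  have "eventually (\<lambda>x. 0 \<le> sgn L * (poly p x / poly q x * (x - a) ^ k * inverse ((x - a) ^ k))) (at a)"
    using L(2) by (rule eventually_sgn_mult_nonneg)
      (use assms(3) in \<open>simp add: k_def zero_le_even_power\<close>)
  moreover have "eventually (\<lambda>x. x \<noteq> a) (at a)" by (simp add: eventually_at_filter)
  ultimately have "eventually (\<lambda>x. 0 \<le> sgn L * (poly p x / poly q x)) (at a)"
    by eventually_elim (simp add: mult.assoc)
  thus ?thesis using L(1) by blast
qed

lemma ratfun_bdd_below_if_no_poles:
  fixes p q :: "real poly"
  assumes "q \<noteq> 0" "degree p \<le> degree q" "\<And>x. poly q x \<noteq> 0"
  shows "bdd_below (range (\<lambda>x. c * (poly p x / poly q x)))"
  using ratfun_eventually_bdd_below_at_infinity[OF assms(1,2)] assms(3) by (intro ratfun_bdd_below) auto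

lemma ratfun_sgn_mult_bdd_below_if_even_pole_at_infinity:
  fixes p q :: "real poly"
  assumes "q \<noteq> 0" "\<And>x. poly q x \<noteq> 0" "degree q < degree p" "even (degree p - degree q)"
  shows "\<exists>L. L \<noteq> 0 \<and> bdd_below (range (\<lambda>x. sgn L * (poly p x / poly q x)))"
proof -
  obtain L where L: "L \<noteq> 0" "eventually (\<lambda>x. 0 \<le> sgn L * (poly p x / poly q x)) at_infinity"
    using ratfun_even_pole_at_infinity[OF assms(1,3,4)] by blast
  have "bdd_below (range (\<lambda>x. sgn L * (poly p x / poly q x)))"
    using L(2) assms(2) by (intro ratfun_bdd_below) auto
  thus ?thesis using L(1) by blast
qed

lemma ratfun_sgn_mult_bdd_below_if_even_root:
  fixes p q :: "real poly"
  assumes "q \<noteq> 0" "degree p \<le> degree q" "\<And>x. poly q x = 0 \<Longrightarrow> x = a"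
    and "poly p a \<noteq> 0" "even (order a q)"
  shows "\<exists>L. L \<noteq> 0 \<and> bdd_below (range (\<lambda>x. sgn L * (poly p x / poly q x)))"
proof -
  obtain L where L: "L \<noteq> 0" "eventually (\<lambda>x. 0 \<le> sgn L * (poly p x / poly q x)) (at a)"
    using ratfun_even_pole[OF assms(1,4,5)] by blast
  have "bdd_below (range (\<lambda>x. sgn L * (poly p x / poly q x)))"
    using L(2) assms(3) ratfun_eventually_bdd_below_at_infinity[OF assms(1,2)] by (intro ratfun_bdd_below) auto
  thus ?thesis using L(1) by blast
qed

lemma ratfun_odd_pole_at_infinity:
  fixes p q :: "real poly"
  assumes "q \<noteq> 0" "degree q < degree p" "odd (degree p - degree q)"
  shows "\<exists>G1 G2. {G1, G2} = {at_top, at_bot} \<and>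
    filterlim (\<lambda>x. poly p x / poly q x) at_top G1 \<and> filterlim (\<lambda>x. poly p x / poly q x) at_bot G2"
proof -
  define k where "k = degree p - degree q"
  have k: "0 < k" "odd k" using assms(2,3) unfolding k_def by auto
  obtain L where L: "L \<noteq> 0" "((\<lambda>x. poly p x / poly q x / x ^ k) \<longlongrightarrow> L) at_infinity"
    using tendsto_ratfun_over_power_at_infinity[OF assms(1,2)] unfolding k_def by blast
  have ev: "eventually (\<lambda>x. poly p x / poly q x / x ^ k * x ^ k = poly p x / poly q x) G"
    if "G \<le> at_infinity" for G
    using filter_leD[OF that eventually_not_equal_at_infinity[of 0]] by eventually_elim simp
  show ?thesis
    by (rule filterlim_at_top_at_bot_factor[OF tendsto_mono[OF at_top_le_at_infinity L(2)]
          tendsto_mono[OF at_bot_le_at_infinity L(2)] L(1)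
          filterlim_pow_at_top[OF k(1) filterlim_ident] filterlim_pow_at_bot_odd[OF k(1) filterlim_ident k(2)]
          ev[OF at_top_le_at_infinity] ev[OF at_bot_le_at_infinity]])
qed

lemma ratfun_odd_pole:
  fixes p q :: "real poly"
  assumes "q \<noteq> 0" "poly p a \<noteq> 0" "odd (order a q)"
  shows "\<exists>G1 G2. {G1, G2} = {at_right a, at_left a} \<and>
    filterlim (\<lambda>x. poly p x / poly q x) at_top G1 \<and> filterlim (\<lambda>x. poly p x / poly q x) at_bot G2"
proof -
  define k where "k = order a q"
  have k: "0 < k" "odd k" using assms(3) unfolding k_def by (auto intro: odd_pos)
  obtain L where L: "L \<noteq> 0" "((\<lambda>x. poly p x / poly q x * (x - a) ^ k) \<longlongrightarrow> L) (at a)"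
    using tendsto_ratfun_times_power_at_root[OF assms(1,2)] unfolding k_def by blast
  have lim0: "((\<lambda>x. (x - a) ^ k) \<longlongrightarrow> 0) (at a within S)" for S
    using k(1) by (intro tendsto_eq_intros) auto
  have "eventually (\<lambda>x. x < a) (at_left a)"
    unfolding eventually_at_left_field by (intro exI[of _ "a - 1"]) auto
  hence bot: "filterlim (\<lambda>x. inverse ((x - a) ^ k)) at_bot (at_left a)"
    using lim0 k(2) by (intro filterlim_inverse_at_bot) (auto elim: eventually_mono)
  have top: "filterlim (\<lambda>x. inverse ((x - a) ^ k)) at_top (at_right a)"
    using lim0 eventually_at_right_less[of a] by (intro filterlim_inverse_at_top) (auto elim: eventually_mono)
  have ev: "eventually (\<lambda>x. poly p x / poly q x * (x - a) ^ k * inverse ((x - a) ^ k)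
      = poly p x / poly q x) (at a within S)" for S
    unfolding eventually_at_filter by (rule always_eventually) simp
  have lim: "((\<lambda>x. poly p x / poly q x * (x - a) ^ k) \<longlongrightarrow> L) (at a within S)" for S
    using tendsto_within_subset[OF L(2)] by simp
  show ?thesis by (rule filterlim_at_top_at_bot_factor[OF lim lim L(1) top bot ev ev])
qed

section \<open>Sumsets\<close>

lemma sumset_add_mem: "s \<in> sumset V N \<Longrightarrow> v \<in> V \<Longrightarrow> s + v \<in> sumset V (Suc N)"
  unfolding sumset_def
proof (elim CollectE exE conjE, intro CollectI exI conjI)
  fix x assume x: "s = (\<Sum>i<N. x i)" "\<forall>i<N. x i \<in> V" and v: "v \<in> V"
  show "s + v = (\<Sum>i<Suc N. (x(N := v)) i)" using x(1) by simp
  show "\<forall>i<Suc N. (x(N := v)) i \<in> V" using x(2) v by (simp add: less_Suc_eq)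
qed

lemma is_base_if_open_base_dense_at_top:
  fixes V :: "rat set"
  assumes "is_open_base V" "dense_at_top V" "dense_at_top (uminus ` V)"
  shows "is_base V"
proof -
  obtain N a b where N: "N \<ge> 1" "a < b" "{q. a < q \<and> q < b} \<subseteq> sumset V N"
    using assms(1) unfolding is_open_base_def by blast
  obtain M1 where M1: "\<And>c d. M1 \<le> c \<Longrightarrow> c < d \<Longrightarrow> \<exists>v\<in>V. c < v \<and> v < d"
    using assms(2) unfolding dense_at_top_def by blast
  obtain M2 where M2: "\<And>c d. M2 \<le> c \<Longrightarrow> c < d \<Longrightarrow> \<exists>v\<in>V. c < - v \<and> - v < d"
    using assms(3) unfolding dense_at_top_def by blast
  have "r \<in> sumset V (Suc (Suc N))" for r
  proof -
    obtain y1 where y1: "y1 \<in> V" "max M1 (M2 + r - a) < y1"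
      using M1[of "max M1 (M2 + r - a)" "max M1 (M2 + r - a) + 1"] by auto
    obtain y2 where y2: "y2 \<in> V" "a - (r - y1) < - y2" "- y2 < b - (r - y1)"
      using M2[of "a - (r - y1)" "b - (r - y1)"] y1(2) N(2) by auto
    have "r - y1 - y2 \<in> sumset V N" using N(3) y2 by auto
    hence "r - y1 - y2 + y2 + y1 \<in> sumset V (Suc (Suc N))" using y1(1) y2(1) by (intro sumset_add_mem)
    thus ?thesis by simp
  qed
  thus ?thesis unfolding is_base_def by (intro exI[of _ "Suc (Suc N)"]) auto
qed

lemma sumset_bdd_below:
  assumes "bdd_below V"
  shows "bdd_below (sumset V N)"
proof -
  obtain m where m: "\<And>v. v \<in> V \<Longrightarrow> m \<le> v" using assms unfolding bdd_below_def by blast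
  have "of_nat N * m \<le> (\<Sum>i<N. x i)" if "\<forall>i<N. x i \<in> V" for x
    using sum_bounded_below[of "{..<N}" m x] m that by simp
  thus ?thesis unfolding sumset_def bdd_below_def by blast
qed

lemma sumset_bdd_above:
  assumes "bdd_above V"
  shows "bdd_above (sumset V N)"
proof -
  obtain m where m: "\<And>v. v \<in> V \<Longrightarrow> v \<le> m" using assms unfolding bdd_above_def by blast
  have "(\<Sum>i<N. x i) \<le> of_nat N * m" if "\<forall>i<N. x i \<in> V" for x
    using sum_bounded_above[of "{..<N}" x m] m that by simp
  thus ?thesis unfolding sumset_def bdd_above_def by blast
qed

lemma not_base_if_bdd_below_or_above:
  fixes V :: "rat set"
  assumes "bdd_below V \<or> bdd_above V"
  shows "\<not> is_base V"
  using assms sumset_bdd_below sumset_bdd_above unfolding is_base_def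
  by (metis bdd_above_def bdd_below_def gt_ex lt_ex UNIV_I not_le)

lemma not_virtual_base_if_bounded:
  fixes V :: "rat set"
  assumes "\<forall>v\<in>V. \<bar>v\<bar> \<le> B"
  shows "\<not> is_virtual_base V"
proof
  assume "is_virtual_base V"
  then obtain N x e where xe: "\<forall>i<N. x i \<in> V \<and> (e i = 1 \<or> e i = -1)"
    "of_nat N * \<bar>B\<bar> + 1 = (\<Sum>i<N. e i * x i)"
    unfolding is_virtual_base_def by blast
  have "\<bar>\<Sum>i<N. e i * x i\<bar> \<le> (\<Sum>i<N. \<bar>e i * x i\<bar>)" by (rule sum_abs)
  also have "\<dots> \<le> of_nat N * \<bar>B\<bar>"
    using sum_bounded_above[of "{..<N}" "\<lambda>i. \<bar>e i * x i\<bar>" "\<bar>B\<bar>"] xe(1) assms by (force simp: abs_mult)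
  finally show False using xe(2) by simp
qed

section \<open>Values at rational points\<close>

abbreviation real_poly :: "rat poly \<Rightarrow> real poly" where
  "real_poly \<equiv> map_poly of_rat"

lemma poly_real_poly_of_rat: "poly (real_poly p) (of_rat x) = of_rat (poly p x)"
  by (induct p) (simp_all add: map_poly_pCons of_rat_add of_rat_mult)

lemma degree_real_poly [simp]: "degree (real_poly p) = degree p"
  by (simp add: degree_map_poly)

lemma real_poly_eq_0_iff [simp]: "real_poly p = 0 \<longleftrightarrow> p = 0"
  by (simp add: map_poly_eq_0_iff)

lemma real_poly_add: "real_poly (p + q) = real_poly p + real_poly q"
  by (rule poly_eqI) (simp add: coeff_map_poly of_rat_add)

lemma real_poly_mult: "real_poly (p * q) = real_poly p * real_poly q"
  by (rule poly_eqI) (simp add: coeff_map_poly coeff_mult of_rat_sum of_rat_mult)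

lemma real_poly_uminus: "real_poly (- p) = - real_poly p"
  by (rule poly_eqI) (simp add: coeff_map_poly of_rat_minus)

lemma coprime_imp_no_common_real_root:
  assumes "coprime P Q" "poly (real_poly Q) x = 0"
  shows "poly (real_poly P) x \<noteq> 0"
proof
  assume "poly (real_poly P) x = 0"
  moreover have "fst (bezout_coefficients P Q) * P + snd (bezout_coefficients P Q) * Q = 1"
    using bezout_coefficients_fst_snd[of P Q] assms(1) by (simp add: coprime_iff_gcd_eq_1)
  hence "poly (real_poly (fst (bezout_coefficients P Q) * P + snd (bezout_coefficients P Q) * Q)) x = 1"
    by simp
  ultimately show False using assms(2) by (simp add: real_poly_add real_poly_mult)
qed

lemma of_rat_ratfun_values:
  "of_rat ` ratfun_values P Q =
    (\<lambda>x. poly (real_poly P) x / poly (real_poly Q) x) ` {x \<in> \<rat>. poly (real_poly Q) x \<noteq> 0}"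
  (is "_ = ?R")
  unfolding ratfun_values_def
proof safe
  fix a assume "poly Q a \<noteq> 0"
  thus "of_rat (poly P a / poly Q a) \<in> ?R"
    by (intro image_eqI[of _ _ "of_rat a"]) (auto simp: poly_real_poly_of_rat of_rat_divide)
next
  fix x :: real assume "x \<in> \<rat>" "poly (real_poly Q) x \<noteq> 0"
  then obtain a where "x = of_rat a" "poly Q a \<noteq> 0" by (auto elim: Rats_cases simp: poly_real_poly_of_rat)
  thus "poly (real_poly P) x / poly (real_poly Q) x \<in> of_rat ` {poly P a / poly Q a | a. poly Q a \<noteq> 0}"
    by (intro image_eqI[of _ _ "poly P a / poly Q a"]) (auto simp: poly_real_poly_of_rat of_rat_divide)
qed

lemma ratfun_values_uminus: "ratfun_values (- P) Q = uminus ` ratfun_values P Q"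
  unfolding ratfun_values_def by force

lemma bdd_below_of_rat_image: "bdd_below (of_rat ` V :: real set) \<Longrightarrow> bdd_below V"
  unfolding bdd_below_def
  by (metis (no_types, lifting) floor_le_iff imageI le_floor_iff of_int_floor_le of_rat_less_eq of_rat_of_int_eq order_trans)

lemma bdd_above_of_rat_image: "bdd_above (of_rat ` V :: real set) \<Longrightarrow> bdd_above V"
  unfolding bdd_above_def
  by (metis (no_types, lifting) imageI le_of_int_ceiling of_rat_less_eq of_rat_of_int_eq order_trans)

lemma bdd_below_ratfun_values:
  "bdd_below (range (\<lambda>x. poly (real_poly P) x / poly (real_poly Q) x)) \<Longrightarrow> bdd_below (ratfun_values P Q)"
  by (rule bdd_below_of_rat_image, erule bdd_below_mono) (auto simp: of_rat_ratfun_values)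

lemma bdd_above_ratfun_values:
  "bdd_above (range (\<lambda>x. poly (real_poly P) x / poly (real_poly Q) x)) \<Longrightarrow> bdd_above (ratfun_values P Q)"
  by (rule bdd_above_of_rat_image, erule bdd_above_mono) (auto simp: of_rat_ratfun_values)

lemma dense_at_top_of_rat_image:
  assumes "dense_at_top (of_rat ` V :: real set)"
  shows "dense_at_top V"
proof -
  obtain M :: real where M: "\<And>c d. M \<le> c \<Longrightarrow> c < d \<Longrightarrow> \<exists>v\<in>of_rat ` V. c < v \<and> v < d"
    using assms unfolding dense_at_top_def by blast
  have "\<exists>v\<in>V. c < v \<and> v < d" if cd: "of_int \<lceil>M\<rceil> \<le> c" "c < d" for c d :: rat
  proof -
    have "(of_int \<lceil>M\<rceil> :: real) \<le> of_rat c" using cd(1) by (metis of_rat_less_eq of_rat_of_int_eq)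
    hence "M \<le> of_rat c" using le_of_int_ceiling[of M] by linarith
    then obtain v where "v \<in> V" "of_rat c < (of_rat v :: real)" "of_rat v < (of_rat d :: real)"
      using M[of "of_rat c" "of_rat d"] cd(2) by (auto simp: of_rat_less)
    thus ?thesis by (auto simp: of_rat_less)
  qed
  thus ?thesis unfolding dense_at_top_def by blast
qed

lemma dense_at_top_ratfun_values:
  fixes P Q :: "rat poly"
  defines "f \<equiv> \<lambda>x. poly (real_poly P) x / poly (real_poly Q) x"
  assumes F: "F \<in> {at_right a, at_left a, at_top, at_bot}" and lim: "filterlim f at_top F"
  shows "dense_at_top (ratfun_values P Q)"
proof -
  have "eventually (\<lambda>x. 0 < f x) F" using lim unfolding filterlim_at_top_dense by blast
  \<comment> \<open>f x > 0 excludes poles, where division by zero makes f x = 0.\<close>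
  hence "eventually (\<lambda>x. poly (real_poly Q) x \<noteq> 0) F" by (rule eventually_mono) (auto simp: f_def)
  then obtain S where S: "open S" "connected S" "\<forall>x\<in>S. poly (real_poly Q) x \<noteq> 0" "eventually (\<lambda>x. x \<in> S) F"
    using eventually_in_open_interval[OF F] by blast
  have "continuous_on S f" unfolding f_def using S(3) by (intro continuous_intros) auto
  moreover have "F \<noteq> bot"
    using F by (metis empty_iff insertE trivial_limit_at_right_real trivial_limit_at_left_real
        trivial_limit_at_top_linorder trivial_limit_at_bot_linorder)
  ultimately have "dense_at_top (f ` (S \<inter> \<rat>))" using dense_at_top_rat_image S(1,2,4) lim by blast
  moreover have "f ` (S \<inter> \<rat>) \<subseteq> of_rat ` ratfun_values P Q"
    unfolding of_rat_ratfun_values f_def using S(3) by auto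
  ultimately have "dense_at_top (of_rat ` ratfun_values P Q :: real set)"
    unfolding dense_at_top_def by (meson subsetD)
  thus ?thesis by (rule dense_at_top_of_rat_image)
qed

section \<open>Real poles\<close>

lemma WP_if_open_base_and_odd_pole:
  fixes P Q :: "rat poly"
  defines "f \<equiv> \<lambda>x. poly (real_poly P) x / poly (real_poly Q) x"
  assumes "Q \<noteq> 0" "coprime P Q" "is_open_base (ratfun_values P Q)"
    and "z \<in> real_poles P Q" "odd (pole_order P Q z)"
  shows "WP P Q"
proof -
  obtain a G1 G2 where G: "G1 \<in> {at_right a, at_left a, at_top, at_bot}" "G2 \<in> {at_right a, at_left a, at_top, at_bot}"
    and lim: "filterlim f at_top G1" "filterlim f at_bot G2"
  proof (cases z)
    case None
    hence "degree Q < degree P" "odd (degree P - degree Q)"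
      using assms(5,6) by (auto simp: real_poles_def pole_order_def split: if_splits)
    from ratfun_odd_pole_at_infinity[of "real_poly Q" "real_poly P"] this assms(2)
    show ?thesis using that unfolding f_def by auto
  next
    case (Some a)
    hence "poly (real_poly Q) a = 0" "odd (order a (real_poly Q))"
      using assms(5,6) by (auto simp: real_poles_def pole_order_def split: if_splits)
    moreover from this(1) have "poly (real_poly P) a \<noteq> 0" by (rule coprime_imp_no_common_real_root[OF assms(3)])
    ultimately show ?thesis
      using ratfun_odd_pole[of "real_poly Q" "real_poly P" a] assms(2) that unfolding f_def by auto
  qed
  have "dense_at_top (ratfun_values P Q)"
    using dense_at_top_ratfun_values[OF G(1)] lim(1) unfolding f_def .
  moreover have "dense_at_top (ratfun_values (- P) Q)"
    using dense_at_top_ratfun_values[OF G(2)] lim(2)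
    unfolding f_def by (simp add: real_poly_uminus filterlim_uminus_at_bot)
  ultimately show ?thesis
    unfolding WP_def ratfun_values_uminus using assms(4) by (intro is_base_if_open_base_dense_at_top)
qed

lemma ratfun_sgn_mult_bdd_below_if_single_even_pole:
  fixes P Q :: "rat poly"
  assumes "Q \<noteq> 0" "coprime P Q"
    and single: "\<forall>z1\<in>real_poles P Q. \<forall>z2\<in>real_poles P Q. z1 = z2"
    and even: "\<forall>z\<in>real_poles P Q. even (pole_order P Q z)"
  shows "\<exists>L. L \<noteq> 0 \<and> bdd_below (range (\<lambda>x. sgn L * (poly (real_poly P) x / poly (real_poly Q) x)))"
proof -
  have roots: "poly (real_poly Q) x = 0 \<longleftrightarrow> Some x \<in> real_poles P Q" for x
    by (auto simp: real_poles_def)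
  have infinity: "degree Q < degree P \<longleftrightarrow> None \<in> real_poles P Q"
    by (simp add: real_poles_def)
  show ?thesis
  proof (cases "degree Q < degree P")
    case True
    hence "\<And>x. poly (real_poly Q) x \<noteq> 0" "even (degree P - degree Q)"
      using single even roots infinity by (fastforce simp: pole_order_def)+
    thus ?thesis using ratfun_sgn_mult_bdd_below_if_even_pole_at_infinity True assms(1) by simp
  next
    case False
    hence deg: "degree (real_poly P) \<le> degree (real_poly Q)" by simp
    show ?thesis
    proof (cases "\<exists>a. poly (real_poly Q) a = 0")
      case True
      then obtain a where a: "poly (real_poly Q) a = 0" by blast
      hence only_a: "\<And>x. poly (real_poly Q) x = 0 \<Longrightarrow> x = a" using single roots by blast
      have "even (order a (real_poly Q))" using even a roots by (fastforce simp: pole_order_def)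
      moreover have "poly (real_poly P) a \<noteq> 0" using a by (rule coprime_imp_no_common_real_root[OF assms(2)])
      moreover have "real_poly Q \<noteq> 0" using assms(1) by simp
      ultimately show ?thesis using ratfun_sgn_mult_bdd_below_if_even_root[OF _ deg only_a] by blast
    next
      case False
      thus ?thesis using ratfun_bdd_below_if_no_poles[OF _ deg, of "sgn 1"] assms(1) by fastforce
    qed
  qed
qed

lemma ratfun_values_bdd_below_or_above:
  fixes P Q :: "rat poly"
  assumes "Q \<noteq> 0" "coprime P Q"
    and "\<forall>z1\<in>real_poles P Q. \<forall>z2\<in>real_poles P Q. z1 = z2"
    and "\<forall>z\<in>real_poles P Q. even (pole_order P Q z)"
  shows "bdd_below (ratfun_values P Q) \<or> bdd_above (ratfun_values P Q)"
proof -
  obtain L where "L \<noteq> 0"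
    and L: "bdd_below (range (\<lambda>x. sgn L * (poly (real_poly P) x / poly (real_poly Q) x)))"
    using ratfun_sgn_mult_bdd_below_if_single_even_pole[OF assms] by blast
  moreover have "sgn L = 1 \<or> sgn L = -1" using \<open>L \<noteq> 0\<close> by (simp add: sgn_real_def)
  ultimately have "bdd_below (range (\<lambda>x. poly (real_poly P) x / poly (real_poly Q) x)) \<or>
      bdd_above (range (\<lambda>x. poly (real_poly P) x / poly (real_poly Q) x))"
    by (auto simp: bdd_below_range_uminus)
  thus ?thesis by (metis bdd_below_ratfun_values bdd_above_ratfun_values)
qed

lemma ratfun_values_bounded_if_no_real_poles:
  fixes P Q :: "rat poly"
  assumes "Q \<noteq> 0" "real_poles P Q = {}"
  shows "\<exists>B. \<forall>v\<in>ratfun_values P Q. \<bar>v\<bar> \<le> B"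
proof -
  have deg: "degree (real_poly P) \<le> degree (real_poly Q)" and roots: "\<And>x. poly (real_poly Q) x \<noteq> 0"
    using assms(2) by (auto simp: real_poles_def split: if_splits)
  have "bdd_below (range (\<lambda>x. c * (poly (real_poly P) x / poly (real_poly Q) x)))" for c
    using ratfun_bdd_below_if_no_poles[OF _ deg roots] assms(1) by simp
  from this[of 1] this[of "-1"] have "bdd_below (ratfun_values P Q)" "bdd_above (ratfun_values P Q)"
    by (auto intro: bdd_below_ratfun_values bdd_above_ratfun_values simp: bdd_below_range_uminus)
  thus ?thesis unfolding bdd_below_def bdd_above_def by (meson abs_le_iff max.cobounded1 max.cobounded2 order_trans neg_le_iff_le)
qed

lemma two_real_poles_or_odd_pole_if_WP:
  fixes P Q :: "rat poly"
  assumes "Q \<noteq> 0" "coprime P Q" "WP P Q"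
  shows "(\<exists>z1\<in>real_poles P Q. \<exists>z2\<in>real_poles P Q. z1 \<noteq> z2) \<or> (\<exists>z\<in>real_poles P Q. odd (pole_order P Q z))"
proof (rule ccontr)
  assume "\<not> ?thesis"
  hence "\<forall>z1\<in>real_poles P Q. \<forall>z2\<in>real_poles P Q. z1 = z2" "\<forall>z\<in>real_poles P Q. even (pole_order P Q z)"
    by auto
  hence "bdd_below (ratfun_values P Q) \<or> bdd_above (ratfun_values P Q)"
    by (rule ratfun_values_bdd_below_or_above[OF assms(1,2)])
  hence "\<not> is_base (ratfun_values P Q)" by (rule not_base_if_bdd_below_or_above)
  thus False using assms(3) unfolding WP_def by contradiction
qed

lemma real_poles_nonempty_if_EWP:
  fixes P Q :: "rat poly"
  assumes "Q \<noteq> 0" "EWP P Q"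
  shows "real_poles P Q \<noteq> {}"
proof
  assume "real_poles P Q = {}"
  then obtain B where "\<forall>v\<in>ratfun_values P Q. \<bar>v\<bar> \<le> B"
    using ratfun_values_bounded_if_no_real_poles[OF assms(1)] by blast
  hence "\<not> is_virtual_base (ratfun_values P Q)" by (rule not_virtual_base_if_bounded)
  thus False using assms(2) unfolding EWP_def by contradiction
qed

section \<open>p-adic poles\<close>

definition lifts_to_approx_roots :: "nat \<Rightarrow> (int \<Rightarrow> int) \<Rightarrow> nat \<Rightarrow> int \<Rightarrow> bool" where
  "lifts_to_approx_roots p G k r \<longleftrightarrow> (\<forall>j. \<exists>n. [n = r] (mod int p ^ k) \<and> int p ^ j dvd G n)"

lemma lifts_to_approx_roots_Suc:
  assumes p: "p \<ge> 2" and cong: "\<And>M x y. [x = y] (mod M) \<Longrightarrow> [G x = G y] (mod M)"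
    and r: "lifts_to_approx_roots p G k r"
  shows "\<exists>r'. [r' = r] (mod int p ^ k) \<and> lifts_to_approx_roots p G (Suc k) r'"
proof (rule ccontr)
  assume "\<not> ?thesis"
  hence "\<forall>t. \<exists>j. \<forall>n. [n = r + int t * int p ^ k] (mod int p ^ Suc k) \<longrightarrow> \<not> int p ^ j dvd G n"
    unfolding lifts_to_approx_roots_def by (metis cong_iff_dvd_diff dvd_triv_right add_diff_cancel_left')
  then obtain j where j: "\<And>t n. [n = r + int t * int p ^ k] (mod int p ^ Suc k) \<Longrightarrow> \<not> int p ^ j t dvd G n"
    by metis
  \<comment> \<open>Pigeonhole: an approximate root to precision J lies in one of the p lifts of r.\<close>
  define J where "J = (\<Sum>t<p. j t)"
  obtain n where n: "[n = r] (mod int p ^ k)" "int p ^ J dvd G n"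
    using r unfolding lifts_to_approx_roots_def by blast
  obtain w where w: "n = r + int p ^ k * w" using n(1) cong_iff_lin[of r n] by (metis cong_sym)
  define t where "t = nat (w mod int p)"
  have "t < p" using p unfolding t_def by (simp add: nat_less_iff)
  have wt: "w = int t + int p * (w div int p)" using p unfolding t_def by simp
  have "n = r + int t * int p ^ k + int p ^ Suc k * (w div int p)"
    unfolding w by (subst wt) (simp add: algebra_simps)
  hence "[n = r + int t * int p ^ k] (mod int p ^ Suc k)"
    by (metis cong_add_lcancel_0 cong_mult_self_left add.commute)
  hence "\<not> int p ^ j t dvd G n" by (rule j)
  moreover have "j t \<le> J" unfolding J_def using \<open>t < p\<close> by (intro member_le_sum) auto
  hence "int p ^ j t dvd G n" using n(2) by (meson dvd_trans le_imp_power_dvd)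
  ultimately show False by blast
qed

lemma padic_root_if_approx_roots:
  assumes p: "p \<ge> 2" and cong: "\<And>M x y. [x = y] (mod M) \<Longrightarrow> [G x = G y] (mod M)"
    and approx: "\<And>K. \<exists>n. int p ^ K dvd G n"
  shows "\<exists>u. padic_int_seq p u \<and> (\<forall>k. int p ^ k dvd G (u k))"
proof -
  have "lifts_to_approx_roots p G 0 0" using approx unfolding lifts_to_approx_roots_def by simp
  moreover have "\<exists>r'. lifts_to_approx_roots p G (Suc k) r' \<and> [r' = r] (mod int p ^ k)"
    if "lifts_to_approx_roots p G k r" for k r
    using lifts_to_approx_roots_Suc[where G = G, OF p cong that] by blast
  ultimately obtain u where "\<forall>k. lifts_to_approx_roots p G k (u k) \<and> [u (Suc k) = u k] (mod int p ^ k)"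
    using dependent_nat_choice[of "lifts_to_approx_roots p G" "\<lambda>k r r'. [r' = r] (mod int p ^ k)"] by blast
  hence u: "\<And>k. lifts_to_approx_roots p G k (u k)" "\<And>k. [u (Suc k) = u k] (mod int p ^ k)" by auto
  have "int p ^ k dvd G (u k)" for k
  proof -
    obtain n where "[n = u k] (mod int p ^ k)" "int p ^ k dvd G n"
      using u(1)[of k] unfolding lifts_to_approx_roots_def by blast
    thus ?thesis using cong cong_dvd_iff by blast
  qed
  moreover have "padic_int_seq p u" unfolding padic_int_seq_def using u(2) by (simp add: cong_iff_dvd_diff)
  ultimately show ?thesis by blast
qed

definition p_integral :: "nat \<Rightarrow> rat set" where
  "p_integral p = {of_int n / of_int d | n d. \<not> int p dvd d}"

lemma int_not_unit_if_prime: "prime p \<Longrightarrow> \<not> is_unit (int p)"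
  using not_prime_unit by force

lemma of_int_in_p_integral: "prime p \<Longrightarrow> of_int n \<in> p_integral p"
  unfolding p_integral_def using int_not_unit_if_prime[of p]
  by (intro CollectI exI[of _ n] exI[of _ 1]) simp

lemma p_integral_add:
  assumes "prime p" "x \<in> p_integral p" "y \<in> p_integral p"
  shows "x + y \<in> p_integral p"
proof -
  obtain n1 d1 n2 d2 where "\<not> int p dvd d1" "x = of_int n1 / of_int d1"
    "\<not> int p dvd d2" "y = of_int n2 / of_int d2"
    using assms(2,3) unfolding p_integral_def by blast
  moreover from this have "\<not> int p dvd d1 * d2" using assms(1) by (simp add: prime_dvd_mult_iff)
  moreover have "d1 \<noteq> 0" "d2 \<noteq> 0" using calculation by auto
  ultimately show ?thesis unfolding p_integral_def
    by (intro CollectI exI[of _ "n1 * d2 + n2 * d1"] exI[of _ "d1 * d2"]) (simp add: add_frac_eq)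
qed

lemma p_integral_mult:
  assumes "prime p" "x \<in> p_integral p" "y \<in> p_integral p"
  shows "x * y \<in> p_integral p"
proof -
  obtain n1 d1 n2 d2 where "\<not> int p dvd d1" "x = of_int n1 / of_int d1"
    "\<not> int p dvd d2" "y = of_int n2 / of_int d2"
    using assms(2,3) unfolding p_integral_def by blast
  moreover from this have "\<not> int p dvd d1 * d2" using assms(1) by (simp add: prime_dvd_mult_iff)
  ultimately show ?thesis unfolding p_integral_def
    by (intro CollectI exI[of _ "n1 * n2"] exI[of _ "d1 * d2"]) auto
qed

lemma p_integral_sum:
  assumes "prime p" "\<And>i. i \<in> A \<Longrightarrow> f i \<in> p_integral p"
  shows "sum f A \<in> p_integral p"
  using assms(2)
proof (induction A rule: infinite_finite_induct)
  case (insert i A)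
  thus ?case using p_integral_add[OF assms(1)] by simp
qed (use of_int_in_p_integral[OF assms(1), of 0] in simp_all)

lemma inverse_not_in_p_integral: "prime p \<Longrightarrow> 1 / of_nat p \<notin> p_integral p"
proof
  assume p: "prime p" and "1 / of_nat p \<in> p_integral p"
  then obtain n d where nd: "\<not> int p dvd d" "1 / of_nat p = (of_int n / of_int d :: rat)"
    unfolding p_integral_def by blast
  hence "(of_int d :: rat) = of_int (int p * n)" using p by (auto simp: field_simps prime_gt_0_nat)
  hence "d = int p * n" by (simp only: of_int_eq_iff)
  thus False using nd(1) by simp
qed

lemma power_mult_fraction_in_p_integral:
  assumes "prime p" "G \<noteq> 0" "\<not> int p ^ Suc J dvd G"
  shows "of_nat p ^ J * (of_int n / of_int G) \<in> p_integral p"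
proof -
  obtain v w where vw: "G = int p ^ v * w" "\<not> int p dvd w"
    using multiplicity_decompose'[OF assms(2) int_not_unit_if_prime[OF assms(1)]] by metis
  have "v \<le> J"
  proof (rule ccontr)
    assume "\<not> v \<le> J"
    hence "int p ^ Suc J dvd G" unfolding vw(1) by (intro dvd_mult2 le_imp_power_dvd) simp
    thus False using assms(3) by simp
  qed
  hence "(of_nat p ^ J :: rat) = of_nat p ^ (J - v) * of_nat p ^ v" by (simp flip: power_add)
  hence "of_nat p ^ J * (of_int n / of_int G) = (of_int (int p ^ (J - v) * n) / of_int w :: rat)"
    using assms(1) vw by (simp add: prime_gt_0_nat)
  thus ?thesis using vw(2) unfolding p_integral_def by blast
qed

lemma not_virtual_base_if_p_bounded:
  fixes V :: "rat set"
  assumes p: "prime p" and bounded: "\<And>v. v \<in> V \<Longrightarrow> of_nat p ^ K * v \<in> p_integral p"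
  shows "\<not> is_virtual_base V"
proof
  assume "is_virtual_base V"
  then obtain N :: nat where "\<forall>r. \<exists>x e. (\<forall>i<N. x i \<in> V \<and> (e i = 1 \<or> e i = -1)) \<and> r = (\<Sum>i<N. e i * x i)"
    unfolding is_virtual_base_def by blast
  then obtain x e where xe: "\<forall>i<N. x i \<in> V \<and> (e i = 1 \<or> e i = -1)"
    "1 / of_nat p ^ Suc K = (\<Sum>i<N. e i * x i)"
    by blast
  have "(1 / of_nat p :: rat) = of_nat p ^ K * (1 / of_nat p ^ Suc K)" using p by (simp add: prime_gt_0_nat)
  also have "\<dots> = (\<Sum>i<N. e i * (of_nat p ^ K * x i))"
    unfolding xe(2) by (simp add: sum_distrib_left algebra_simps)
  also have "\<dots> \<in> p_integral p"
  proof (rule p_integral_sum[OF p])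
    fix i assume "i \<in> {..<N}"
    hence x: "x i \<in> V" and "e i = 1 \<or> e i = -1" using xe(1) by auto
    hence "e i \<in> p_integral p" using of_int_in_p_integral[OF p, of 1] of_int_in_p_integral[OF p, of "-1"] by auto
    thus "e i * (of_nat p ^ K * x i) \<in> p_integral p" by (rule p_integral_mult[OF p _ bounded[OF x]])
  qed
  finally show False using inverse_not_in_p_integral[OF p] by simp
qed

lemma exists_denominator:
  fixes P :: "rat poly"
  shows "\<exists>d::int. d > 0 \<and> (\<forall>i. of_int d * coeff P i \<in> \<int>)"
proof (induction P)
  case (pCons a P)
  then obtain d where d: "d > 0" "\<forall>i. of_int d * coeff P i \<in> \<int>" by blast
  obtain n m where nm: "quotient_of a = (n, m)" by (cases "quotient_of a")
  have m: "m > 0" "a = of_int n / of_int m" using quotient_of_denom_pos[OF nm] quotient_of_div[OF nm] by auto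
  have "of_int (d * m) * coeff (pCons a P) i \<in> \<int>" for i
  proof (cases i)
    case 0
    have "of_int (d * m) * coeff (pCons a P) i = of_int (d * n)" using m 0 by simp
    thus ?thesis by (metis Ints_of_int)
  next
    case (Suc j)
    have "of_int (d * m) * coeff P j = of_int m * (of_int d * coeff P j)" by simp
    thus ?thesis using Suc d(2) by (metis Ints_mult Ints_of_int coeff_pCons_Suc)
  qed
  thus ?case using d(1) m(1) by (intro exI[of _ "d * m"]) simp
qed (intro exI[of _ 1], simp)

lemma int_poly_common_denominator:
  fixes P Q :: "rat poly"
  obtains L :: int and h g :: "int poly" where "L > 0"
    "P = smult (1 / of_int L) (map_poly of_int h)" "Q = smult (1 / of_int L) (map_poly of_int g)"
proof -
  obtain d1 where d1: "d1 > 0" "\<forall>i. of_int d1 * coeff P i \<in> \<int>" using exists_denominator by blast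
  obtain d2 where d2: "d2 > 0" "\<forall>i. of_int d2 * coeff Q i \<in> \<int>" using exists_denominator by blast
  have "\<forall>i. coeff (smult (of_int (d1 * d2)) P) i \<in> \<int>"
    using d1(2) by (metis Ints_mult Ints_of_int coeff_smult mult.assoc mult.commute of_int_mult)
  then obtain h where h: "smult (of_int (d1 * d2)) P = map_poly of_int h" by (metis intpolyE)
  have "\<forall>i. coeff (smult (of_int (d1 * d2)) Q) i \<in> \<int>"
    using d2(2) by (metis Ints_mult Ints_of_int coeff_smult mult.assoc of_int_mult)
  then obtain g where g: "smult (of_int (d1 * d2)) Q = map_poly of_int g" by (metis intpolyE)
  have L: "d1 * d2 > 0" using d1(1) d2(1) by simp
  hence "P = smult (1 / of_int (d1 * d2)) (map_poly of_int h)" "Q = smult (1 / of_int (d1 * d2)) (map_poly of_int g)"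
    unfolding h[symmetric] g[symmetric] using d1(1) d2(1) by simp_all
  with L that show ?thesis by blast
qed

lemma poly_eq_sum_atMost:
  fixes q :: "'a::comm_semiring_1 poly"
  assumes "degree q \<le> D"
  shows "poly q x = (\<Sum>i\<le>D. coeff q i * x ^ i)"
  unfolding poly_altdef using assms by (intro sum.mono_neutral_left) (auto simp: coeff_eq_0)

definition homogenize :: "int poly \<Rightarrow> nat \<Rightarrow> int \<Rightarrow> int \<Rightarrow> int" where
  "homogenize g D s t = (\<Sum>i\<le>D. coeff g i * s ^ i * t ^ (D - i))"

lemma of_int_homogenize:
  assumes "degree g \<le> D" "t \<noteq> 0"
  shows "(of_int (homogenize g D s t) :: rat) = of_int t ^ D * poly (map_poly of_int g) (of_int s / of_int t)"
proof -
  have "poly (map_poly of_int g) (of_int s / of_int t :: rat) = (\<Sum>i\<le>D. of_int (coeff g i) * (of_int s / of_int t) ^ i)"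
    using assms(1) by (simp add: poly_eq_sum_atMost[of _ D] degree_map_poly coeff_map_poly)
  hence "of_int t ^ D * poly (map_poly of_int g) (of_int s / of_int t :: rat) =
      (\<Sum>i\<le>D. of_int (coeff g i) * (of_int s / of_int t) ^ i * of_int t ^ D)"
    by (simp add: sum_distrib_left algebra_simps)
  also have "\<dots> = (\<Sum>i\<le>D. of_int (coeff g i * s ^ i * t ^ (D - i)))"
  proof (rule sum.cong[OF refl])
    fix i assume "i \<in> {..D}"
    hence "(of_int t :: rat) ^ D = of_int t ^ i * of_int t ^ (D - i)" by (simp flip: power_add)
    thus "of_int (coeff g i) * (of_int s / of_int t) ^ i * of_int t ^ D = (of_int (coeff g i * s ^ i * t ^ (D - i)) :: rat)"
      using assms(2) by (simp add: power_divide)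
  qed
  finally show ?thesis unfolding homogenize_def by simp
qed

lemma homogenize_cong: "[x = y] (mod M) \<Longrightarrow> [homogenize g D x t = homogenize g D y t] (mod M)"
  unfolding homogenize_def by (intro cong_sum cong_scalar_right cong_scalar_left cong_pow)

lemma homogenize_unit_rescale:
  assumes "prime p" "\<not> int p dvd t" "int p ^ K dvd homogenize g D n (int p ^ e * t)"
  shows "\<exists>n'. int p ^ K dvd homogenize g D n' (int p ^ e)"
proof -
  have "coprime (int p) t" using assms(1,2) by (intro prime_imp_coprime) simp_all
  hence "coprime t (int p ^ K)" by (simp add: coprime_commute)
  then obtain w where w: "[t * w = 1] (mod int p ^ K)" using cong_solve_coprime_int by blast
  have "w ^ D * homogenize g D n (int p ^ e * t) =
      (\<Sum>i\<le>D. coeff g i * (n * w) ^ i * (int p ^ e) ^ (D - i) * (t * w) ^ (D - i))"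
    unfolding homogenize_def sum_distrib_left
  proof (rule sum.cong[OF refl])
    fix i assume "i \<in> {..D}"
    hence "w ^ D = w ^ i * w ^ (D - i)" by (simp flip: power_add)
    thus "w ^ D * (coeff g i * n ^ i * (int p ^ e * t) ^ (D - i)) =
        coeff g i * (n * w) ^ i * (int p ^ e) ^ (D - i) * (t * w) ^ (D - i)"
      by (simp only: power_mult_distrib mult_ac)
  qed
  also have "[\<dots> = (\<Sum>i\<le>D. coeff g i * (n * w) ^ i * (int p ^ e) ^ (D - i) * 1 ^ (D - i))] (mod int p ^ K)"
    using w by (intro cong_sum cong_scalar_left cong_pow)
  finally have "[w ^ D * homogenize g D n (int p ^ e * t) = homogenize g D (n * w) (int p ^ e)] (mod int p ^ K)"
    by (simp add: homogenize_def)
  moreover have "int p ^ K dvd w ^ D * homogenize g D n (int p ^ e * t)" using assms(3) by simp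
  ultimately show ?thesis using cong_dvd_iff by blast
qed

lemma homogenize_not_dvd_if_denominator_dvd:
  assumes p: "prime p" and g: "\<not> int p ^ Suc e dvd coeff g D" and t: "int p ^ Suc e dvd t"
    and st: "coprime s t"
  shows "\<not> int p ^ Suc e dvd homogenize g D s t"
proof
  assume H: "int p ^ Suc e dvd homogenize g D s t"
  have "int p dvd t" using t by (rule dvd_trans[rotated]) simp
  hence "\<not> int p dvd s" using coprime_common_divisor[OF st] int_not_unit_if_prime[OF p] by blast
  hence "coprime (int p ^ Suc e) (s ^ D)" using p by (simp add: prime_imp_coprime)
  have "[(\<Sum>i<D. coeff g i * s ^ i * t ^ (D - i)) = (\<Sum>i<D. 0)] (mod int p ^ Suc e)"
  proof (rule cong_sum)
    fix i assume "i \<in> {..<D}"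
    hence "t dvd t ^ (D - i)" by simp
    hence "int p ^ Suc e dvd coeff g i * s ^ i * t ^ (D - i)" using t by (metis dvd_mult dvd_trans)
    thus "[coeff g i * s ^ i * t ^ (D - i) = 0] (mod int p ^ Suc e)" by (simp add: cong_0_iff)
  qed
  hence "[homogenize g D s t = coeff g D * s ^ D] (mod int p ^ Suc e)"
    unfolding homogenize_def lessThan_Suc_atMost[symmetric] using cong_add_rcancel_0 by fastforce
  hence "int p ^ Suc e dvd coeff g D * s ^ D" using H cong_dvd_iff by blast
  hence "int p ^ Suc e dvd coeff g D" using \<open>coprime (int p ^ Suc e) (s ^ D)\<close> coprime_dvd_mult_left_iff by blast
  thus False using g by contradiction
qed

lemma has_Qp_root_if_approx_roots:
  assumes p: "prime p" and Q: "c \<noteq> 0" "Q = smult c (map_poly of_int g)"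
    and approx: "\<And>K. \<exists>n. int p ^ K dvd homogenize g (degree g) n (int p ^ e)"
  shows "has_Qp_root p Q"
proof -
  obtain u where "padic_int_seq p u" "\<forall>k. int p ^ k dvd homogenize g (degree g) (u k) (int p ^ e)"
    using padic_root_if_approx_roots[OF prime_ge_2_nat[OF p] homogenize_cong approx] by blast
  thus ?thesis unfolding has_Qp_root_def using Q by (auto simp: homogenize_def power_mult)
qed

lemma not_dvd_power_mono: "\<not> x ^ Suc a dvd y \<Longrightarrow> a \<le> b \<Longrightarrow> \<not> x ^ Suc b dvd (y :: int)"
  by (meson Suc_le_mono dvd_trans le_imp_power_dvd)

lemma homogenize_valuation_bounded_if_no_Qp_root:
  assumes p: "prime p" and Q: "c \<noteq> 0" "Q = smult c (map_poly of_int g)"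
    and no_root: "\<not> has_Qp_root p Q"
  shows "\<exists>K. \<forall>n t. \<not> int p dvd t \<longrightarrow> \<not> int p ^ Suc K dvd homogenize g (degree g) n (int p ^ e * t)"
proof (rule ccontr)
  assume "\<not> ?thesis"
  hence "\<exists>n. int p ^ K dvd homogenize g (degree g) n (int p ^ e)" for K
    using homogenize_unit_rescale[OF p] by (meson dvd_trans le_imp_power_dvd le_SucI order_refl)
  hence "has_Qp_root p Q" by (rule has_Qp_root_if_approx_roots[OF p Q])
  thus False using no_root by contradiction
qed

lemma homogenize_bounded_representation:
  assumes p: "prime p" and Q: "c \<noteq> 0" "Q = smult c (map_poly of_int g)" "g \<noteq> 0"
    and no_root: "\<not> has_Qp_root p Q"
  shows "\<exists>K. \<forall>a::rat. \<exists>n t. t \<noteq> 0 \<and> a = of_int n / of_int t \<and> \<not> int p ^ Suc K dvd homogenize g (degree g) n t"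
proof -
  define D where "D = degree g"
  define e where "e = multiplicity (int p) (coeff g D)"
  have e: "\<not> int p ^ Suc e dvd coeff g D"
    using power_dvd_iff_le_multiplicity[of "coeff g D" "int p" "Suc e"] Q(3) int_not_unit_if_prime[OF p]
    unfolding e_def D_def by simp
  obtain K0 where K0: "\<And>n t. \<not> int p dvd t \<Longrightarrow> \<not> int p ^ Suc K0 dvd homogenize g D n (int p ^ e * t)"
    using homogenize_valuation_bounded_if_no_Qp_root[OF p Q(1,2) no_root] unfolding D_def by blast
  have "\<exists>n t. t \<noteq> 0 \<and> a = of_int n / of_int t \<and> \<not> int p ^ Suc (max e K0) dvd homogenize g D n t"
    for a :: rat
  proof -
    obtain s t where st: "quotient_of a = (s, t)" by (cases "quotient_of a")
    have t: "t > 0" "coprime s t" "a = of_int s / of_int t"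
      using quotient_of_denom_pos[OF st] quotient_of_coprime[OF st] quotient_of_div[OF st] by auto
    obtain j t' where jt: "t = int p ^ j * t'" "\<not> int p dvd t'"
      using multiplicity_decompose'[of t "int p"] t(1) int_not_unit_if_prime[OF p] by (metis less_irrefl)
    show ?thesis
    proof (cases "Suc e \<le> j")
      case True
      hence "int p ^ Suc e dvd t" unfolding jt(1) by (intro dvd_mult2 le_imp_power_dvd)
      hence "\<not> int p ^ Suc e dvd homogenize g D s t"
        by (rule homogenize_not_dvd_if_denominator_dvd[OF p e _ t(2)])
      thus ?thesis using t not_dvd_power_mono by (metis less_irrefl max.cobounded1)
    next
      case False
      define n where "n = s * int p ^ (e - j)"
      have "int p ^ e = int p ^ j * int p ^ (e - j)" using False by (simp flip: power_add)
      hence "a = of_int n / of_int (int p ^ e * t')"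
        using t(3) p unfolding n_def jt(1) by (simp add: prime_gt_0_nat)
      moreover have "int p ^ e * t' \<noteq> 0" using jt(2) p by (auto simp: prime_gt_0_nat)
      moreover have "\<not> int p ^ Suc K0 dvd homogenize g D n (int p ^ e * t')" using K0 jt(2) by blast
      ultimately show ?thesis using not_dvd_power_mono max.cobounded2 by blast
    qed
  qed
  thus ?thesis unfolding D_def by blast
qed

lemma ratfun_values_p_bounded:
  fixes P Q :: "rat poly"
  assumes p: "prime p" and "Q \<noteq> 0" "degree P \<le> degree Q" "\<not> has_Qp_root p Q"
  shows "\<exists>K. \<forall>v\<in>ratfun_values P Q. of_nat p ^ K * v \<in> p_integral p"
proof -
  obtain L h g where L: "L > 0" and h: "P = smult (1 / of_int L) (map_poly of_int h)"
    and g: "Q = smult (1 / of_int L) (map_poly of_int g)"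
    by (rule int_poly_common_denominator)
  have L': "(1 / of_int L :: rat) \<noteq> 0" using L by simp
  have "degree P = degree h" "degree Q = degree g" unfolding h g using L' by (simp_all add: degree_map_poly)
  hence deg: "degree h \<le> degree g" using assms(3) by simp
  have "g \<noteq> 0" using assms(2) unfolding g by auto
  then obtain K where K: "\<forall>a::rat. \<exists>n t. t \<noteq> 0 \<and> a = of_int n / of_int t \<and> \<not> int p ^ Suc K dvd homogenize g (degree g) n t"
    using homogenize_bounded_representation[OF p L' g _ assms(4)] by blast
  have "of_nat p ^ K * v \<in> p_integral p" if v: "v \<in> ratfun_values P Q" for v
  proof -
    obtain a where a: "poly Q a \<noteq> 0" "v = poly P a / poly Q a"
      using v unfolding ratfun_values_def by blast
    obtain n t where nt: "t \<noteq> 0" "a = of_int n / of_int t" "\<not> int p ^ Suc K dvd homogenize g (degree g) n t"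
      using K by blast
    have hom: "of_int (homogenize h (degree g) n t) = of_int t ^ degree g * poly (map_poly of_int h) a"
      "of_int (homogenize g (degree g) n t) = of_int t ^ degree g * poly (map_poly of_int g) a"
      unfolding nt(2) by (rule of_int_homogenize[OF deg nt(1)], rule of_int_homogenize[OF order_refl nt(1)])
    have "poly (map_poly of_int g) a \<noteq> 0" "(of_int t :: rat) ^ degree g \<noteq> 0"
      using a(1) nt(1) unfolding g by simp_all
    hence "homogenize g (degree g) n t \<noteq> 0" using hom(2) by (metis mult_eq_0_iff of_int_eq_0_iff)
    moreover have "v = of_int (homogenize h (degree g) n t) / of_int (homogenize g (degree g) n t)"
      unfolding a(2) hom h g using L' nt(1) by simp
    ultimately show ?thesis using power_mult_fraction_in_p_integral[OF p _ nt(3)] by simp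
  qed
  thus ?thesis by blast
qed

lemma has_Qp_pole_if_EWP:
  assumes "Q \<noteq> 0" "EWP P Q" "prime p"
  shows "has_Qp_pole p P Q"
  using ratfun_values_p_bounded[OF assms(3,1)] not_virtual_base_if_p_bounded[OF assms(3)] assms(2)
  unfolding has_Qp_pole_def EWP_def by (meson not_le)

theorem proposition2p5:
  fixes P Q :: "rat poly"
  assumes "Q \<noteq> 0" and "coprime P Q" and "nonconstant P Q"
  shows "(WP P Q \<longrightarrow>
            (\<exists>z1\<in>real_poles P Q. \<exists>z2\<in>real_poles P Q. z1 \<noteq> z2) \<or>
            (\<exists>z\<in>real_poles P Q. odd (pole_order P Q z)))
       \<and> (is_open_base (ratfun_values P Q) \<and> (\<exists>z\<in>real_poles P Q. odd (pole_order P Q z))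
            \<longrightarrow> WP P Q)
       \<and> (EWP P Q \<longrightarrow> real_poles P Q \<noteq> {})
       \<and> (EWP P Q \<longrightarrow> (\<forall>p::nat. prime p \<longrightarrow> has_Qp_pole p P Q))"
proof (intro conjI impI)
  show "(\<exists>z1\<in>real_poles P Q. \<exists>z2\<in>real_poles P Q. z1 \<noteq> z2) \<or> (\<exists>z\<in>real_poles P Q. odd (pole_order P Q z))"
    if "WP P Q" using that by (rule two_real_poles_or_odd_pole_if_WP[OF assms(1,2)])
  show "WP P Q" if "is_open_base (ratfun_values P Q) \<and> (\<exists>z\<in>real_poles P Q. odd (pole_order P Q z))"
    using that WP_if_open_base_and_odd_pole[OF assms(1,2)] by blast
  show "real_poles P Q \<noteq> {}" if "EWP P Q" using that by (rule real_poles_nonempty_if_EWP[OF assms(1)])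
  show "\<forall>p. prime p \<longrightarrow> has_Qp_pole p P Q" if "EWP P Q" using has_Qp_pole_if_EWP[OF assms(1) that] by blast
qed

end
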